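(* Let $(T,f,(\le_h))$ be an ordered merge tree, let $\tau\colon[0,1]\to T$ be a partial in-order curve (in particular, any in-order curve) on $T$, and let $t_1\le t_2$ in $[0,1]$. Then $\tau(t)\in T_x$ for all $t\in[t_1,t_2]$, where $x=\mathrm{lca}(\tau(t_1),\tau(t_2))$.
   Context: A merge tree $(T,f)$: a finite rooted tree $T$ identified with its topological realisation (edges are copies of $[0,1]$), with a continuous $f\colon T\to\mathbb{R}\cup\{\infty\}$ strictly increasing towards the root, $f(v)=\infty$ iff $v$ is the root; lowest leaf at height $0$. $x_1\preceq x_2$ iff there is an $f$-increasing path from $x_1$ to $x_2$; $T_x$ is the subtree of descendants of $x$; $\mathrm{lca}$ the lowest common ancestor; $\mathrm{anc}_h(x)$ the unique ancestor of $x$ at height $h$; $\mathbb{L}_h=\{x:f(x)=h\}$. A layer-order is a family $(\le_h)_{h\ge0}$ of total orders on the $\mathbb{L}_h$ that is consistent ($h_1\le h_2$, $x_1\le_{h_1}x_2$ imply $\mathrm{anc}_{h_2}(x_1)\le_{h_2}\mathrm{anc}_{h_2}(x_2)$); $(T,f,(\le_h))$ is an ordered merge tree. For a curve $\sigma\colon[0,1]\to T$, the number of times $\sigma$ visits $x$ is the number of connected components of $\sigma^{-1}(x)$. $\deg(x)$ is the down-degree of $x$ ($1$ for edge-interior points, $0$ for leaves). For a vertex $v$ and a strict ancestor $x$ of $v$ on the parent edge of $v$ (possibly its upper endpoint), the planted subtree is $T_{x,v}=T_v\cup[x,v]$ with root $x$; it is $\sigma$-unvisited if all its points except possibly $x$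 are unvisited by $\sigma$; the $\sigma$-unvisited degree of $x$ is the number of $\sigma$-unvisited planted subtrees rooted at $x$. A curve $\tau\colon[0,1]\to T$ starting and ending at the root is a partial in-order curve if (1) for all $t_1,t_2$ with $f(\tau(t_1))=f(\tau(t_2))=h$ and $\tau(t_1)<_h\tau(t_2)$ we have $t_1<t_2$, and (2) each $x\in T$ is visited exactly $\deg(x)+1-\kappa$ times, where $\kappa$ is the $\tau$-unvisited degree of $x$. It is an in-order curve if moreover each $x$ is visited exactly $\deg(x)+1$ times. *)

theory Defs
  imports "HOL-Analysis.Analysis"
begin

definition rooted_tree :: "'v::finite \<Rightarrow> ('v \<Rightarrow> 'v) \<Rightarrow> bool" where
  "rooted_tree r par \<longleftrightarrow> par r = r \<and> (\<forall>v. \<exists>n. (par ^^ n) v = r)"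

definition sanc :: "('v \<Rightarrow> 'v) \<Rightarrow> 'v \<Rightarrow> 'v set" where
  "sanc par u = {(par ^^ n) u | n. n \<ge> 1}"

text \<open>Geometric realisation in real^'v: the point at parameter s in [0,1] of the edge
from u (s = 0) to par u (s = 1). Coordinate w records which fraction of the edge
below w is traversed by the path from the point to the root.\<close>

definition emb :: "'v::finite \<Rightarrow> ('v \<Rightarrow> 'v) \<Rightarrow> 'v \<Rightarrow> real \<Rightarrow> real^'v" where
  "emb r par u s = (\<chi> w. if w = u then 1 - s
                          else if w \<noteq> r \<and> w \<in> sanc par u then 1 else 0)"

definition vtx :: "'v::finite \<Rightarrow> ('v \<Rightarrow> 'v) \<Rightarrow> 'v \<Rightarrow> real^'v" where
  "vtx r par v = (if v = r then 0 else emb r par v 0)"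

definition realization :: "'v::finite \<Rightarrow> ('v \<Rightarrow> 'v) \<Rightarrow> (real^'v) set" where
  "realization r par = {0} \<union> (\<Union>u\<in>{u. u \<noteq> r}. emb r par u ` {0..1})"

definition is_leaf :: "'v \<Rightarrow> ('v \<Rightarrow> 'v) \<Rightarrow> 'v \<Rightarrow> bool" where
  "is_leaf r par v \<longleftrightarrow> (\<forall>w. w \<noteq> r \<longrightarrow> par w \<noteq> v)"

definition merge_tree ::
  "'v::finite \<Rightarrow> ('v \<Rightarrow> 'v) \<Rightarrow> (real^'v \<Rightarrow> ereal) \<Rightarrow> bool" where
  "merge_tree r par f \<longleftrightarrow>
     rooted_tree r par \<and>
     continuous_on (realization r par) f \<and>
     (\<forall>x\<in>realization r par. f x = \<infinity> \<longleftrightarrow> x = vtx r par r) \<and>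
     (\<forall>x\<in>realization r par. f x \<noteq> -\<infinity>) \<and>
     (\<forall>\<gamma>. arc \<gamma> \<and> path_image \<gamma> \<subseteq> realization r par \<and> pathfinish \<gamma> = vtx r par r
            \<longrightarrow> strict_mono_on {0..1} (f \<circ> \<gamma>)) \<and>
     (\<exists>v. is_leaf r par v \<and> f (vtx r par v) = 0) \<and>
     (\<forall>v. is_leaf r par v \<longrightarrow> f (vtx r par v) \<ge> 0)"

definition prec ::
  "'v::finite \<Rightarrow> ('v \<Rightarrow> 'v) \<Rightarrow> (real^'v \<Rightarrow> ereal) \<Rightarrow> real^'v \<Rightarrow> real^'v \<Rightarrow> bool" where
  "prec r par f x y \<longleftrightarrow> x \<in> realization r par \<and> y \<in> realization r par \<and>
     (\<exists>\<gamma>. path \<gamma> \<and> path_image \<gamma> \<subseteq> realization r par \<and>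
          pathstart \<gamma> = x \<and> pathfinish \<gamma> = y \<and> mono_on {0..1} (f \<circ> \<gamma>))"

definition subtree ::
  "'v::finite \<Rightarrow> ('v \<Rightarrow> 'v) \<Rightarrow> (real^'v \<Rightarrow> ereal) \<Rightarrow> real^'v \<Rightarrow> (real^'v) set" where
  "subtree r par f x = {y \<in> realization r par. prec r par f y x}"

definition lca ::
  "'v::finite \<Rightarrow> ('v \<Rightarrow> 'v) \<Rightarrow> (real^'v \<Rightarrow> ereal) \<Rightarrow> real^'v \<Rightarrow> real^'v \<Rightarrow> real^'v" where
  "lca r par f x y = (THE z. prec r par f x z \<and> prec r par f y z \<and>
       (\<forall>w. prec r par f x w \<and> prec r par f y w \<longrightarrow> prec r par f z w))"

definition anc ::
  "'v::finite \<Rightarrow> ('v \<Rightarrow> 'v) \<Rightarrow> (real^'v \<Rightarrow> ereal) \<Rightarrow> real \<Rightarrow> real^'v \<Rightarrow> real^'v" where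
  "anc r par f h x = (THE y. prec r par f x y \<and> f y = ereal h)"

definition layer ::
  "'v::finite \<Rightarrow> ('v \<Rightarrow> 'v) \<Rightarrow> (real^'v \<Rightarrow> ereal) \<Rightarrow> real \<Rightarrow> (real^'v) set" where
  "layer r par f h = {x \<in> realization r par. f x = ereal h}"

definition layer_order ::
  "'v::finite \<Rightarrow> ('v \<Rightarrow> 'v) \<Rightarrow> (real^'v \<Rightarrow> ereal) \<Rightarrow>
   (real \<Rightarrow> real^'v \<Rightarrow> real^'v \<Rightarrow> bool) \<Rightarrow> bool" where
  "layer_order r par f le \<longleftrightarrow>
     (\<forall>h\<ge>0. let L = layer r par f h in
        (\<forall>x\<in>L. le h x x) \<and>
        (\<forall>x\<in>L. \<forall>y\<in>L. le h x y \<and> le h y x \<longrightarrow> x = y) \<and>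
        (\<forall>x\<in>L. \<forall>y\<in>L. \<forall>z\<in>L. le h x y \<and> le h y z \<longrightarrow> le h x z) \<and>
        (\<forall>x\<in>L. \<forall>y\<in>L. le h x y \<or> le h y x)) \<and>
     (\<forall>h1 h2 x1 x2. 0 \<le> h1 \<and> h1 \<le> h2 \<and> x1 \<in> layer r par f h1 \<and> x2 \<in> layer r par f h1 \<and>
        le h1 x1 x2 \<longrightarrow> le h2 (anc r par f h2 x1) (anc r par f h2 x2))"

definition visits :: "(real \<Rightarrow> 'a) \<Rightarrow> 'a \<Rightarrow> nat" where
  "visits \<sigma> x = card (components {t \<in> {0..1}. \<sigma> t = x})"

definition down_degree :: "'v::finite \<Rightarrow> ('v \<Rightarrow> 'v) \<Rightarrow> real^'v \<Rightarrow> nat" where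
  "down_degree r par x =
     (if x \<in> range (vtx r par)
      then card {w. w \<noteq> r \<and> par w = (THE v. vtx r par v = x)} else 1)"

text \<open>x roots a planted subtree T_{x,v}: v is a non-root vertex and x a strict ancestor
of v on the parent edge of v (possibly its upper endpoint).\<close>
definition planted_at :: "'v::finite \<Rightarrow> ('v \<Rightarrow> 'v) \<Rightarrow> real^'v \<Rightarrow> 'v \<Rightarrow> bool" where
  "planted_at r par x v \<longleftrightarrow> v \<noteq> r \<and> (\<exists>s\<in>{0<..1}. x = emb r par v s)"

definition planted ::
  "'v::finite \<Rightarrow> ('v \<Rightarrow> 'v) \<Rightarrow> (real^'v \<Rightarrow> ereal) \<Rightarrow> real^'v \<Rightarrow> 'v \<Rightarrow> (real^'v) set" where
  "planted r par f x v = subtree r par f (vtx r par v) \<union>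
     {emb r par v s' | s'. 0 \<le> s' \<and> (\<exists>s. x = emb r par v s \<and> s' \<le> s)}"

definition unvisited_planted ::
  "'v::finite \<Rightarrow> ('v \<Rightarrow> 'v) \<Rightarrow> (real^'v \<Rightarrow> ereal) \<Rightarrow> (real \<Rightarrow> real^'v) \<Rightarrow> real^'v \<Rightarrow> 'v \<Rightarrow> bool" where
  "unvisited_planted r par f \<sigma> x v \<longleftrightarrow> planted_at r par x v \<and>
     (\<forall>y \<in> planted r par f x v - {x}. y \<notin> \<sigma> ` {0..1})"

definition unvisited_degree ::
  "'v::finite \<Rightarrow> ('v \<Rightarrow> 'v) \<Rightarrow> (real^'v \<Rightarrow> ereal) \<Rightarrow> (real \<Rightarrow> real^'v) \<Rightarrow> real^'v \<Rightarrow> nat" where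
  "unvisited_degree r par f \<sigma> x = card {v. unvisited_planted r par f \<sigma> x v}"

definition partial_in_order ::
  "'v::finite \<Rightarrow> ('v \<Rightarrow> 'v) \<Rightarrow> (real^'v \<Rightarrow> ereal) \<Rightarrow>
   (real \<Rightarrow> real^'v \<Rightarrow> real^'v \<Rightarrow> bool) \<Rightarrow> (real \<Rightarrow> real^'v) \<Rightarrow> bool" where
  "partial_in_order r par f le \<tau> \<longleftrightarrow>
     continuous_on {0..1} \<tau> \<and> \<tau> ` {0..1} \<subseteq> realization r par \<and>
     \<tau> 0 = vtx r par r \<and> \<tau> 1 = vtx r par r \<and>
     (\<forall>t1\<in>{0..1}. \<forall>t2\<in>{0..1}. \<forall>h\<ge>0.
        f (\<tau> t1) = ereal h \<and> f (\<tau> t2) = ereal h \<and> le h (\<tau> t1) (\<tau> t2) \<and> \<tau> t1 \<noteq> \<tau> t2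
        \<longrightarrow> t1 < t2) \<and>
     (\<forall>x\<in>realization r par.
        int (visits \<tau> x) = int (down_degree r par x) + 1 - int (unvisited_degree r par f \<tau> x))"

definition in_order ::
  "'v::finite \<Rightarrow> ('v \<Rightarrow> 'v) \<Rightarrow> (real^'v \<Rightarrow> ereal) \<Rightarrow>
   (real \<Rightarrow> real^'v \<Rightarrow> real^'v \<Rightarrow> bool) \<Rightarrow> (real \<Rightarrow> real^'v) \<Rightarrow> bool" where
  "in_order r par f le \<tau> \<longleftrightarrow> partial_in_order r par f le \<tau> \<and>
     (\<forall>x\<in>realization r par. visits \<tau> x = down_degree r par x + 1)"

end

theory Submission
  imports Defs
begin

text \<open>
  A point of the realisation is a vector in \<open>[0,1]^V\<close> recording which fraction of every edge
  lies on its path to the root, so the root is \<open>0\<close>, \<open>x \<preceq> y\<close> holds exactly when \<open>y \<le> x\<close>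
  coordinatewise, and the lowest common ancestor is the coordinatewise minimum. If \<open>\<tau> t\<close> left
  the subtree of \<open>lca (\<tau> t1) (\<tau> t2)\<close> for some \<open>t \<in> [t1, t2]\<close>, some coordinate \<open>u\<close> would
  satisfy \<open>\<tau> t $ u < c < min (\<tau> t1 $ u) (\<tau> t2 $ u)\<close>. Since \<open>\<tau> 0 = 0\<close>, the intermediate
  value theorem then makes \<open>\<tau>\<close> pass through the point of edge \<open>u\<close> at level \<open>c\<close> in three time
  intervals separated by \<open>t1\<close> and \<open>t\<close>, whereas a partial in-order curve visits a point interior
  to an edge at most twice.
\<close>

lemma inf_vec_nth [simp]: "inf x y $ i = min (x $ i) (y $ i :: real)"
  by (simp add: inf_vec_def inf_min)

section \<open>Strict ancestors in a rooted tree\<close>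

locale finite_rooted_tree =
  fixes r :: "'v::finite" and par :: "'v \<Rightarrow> 'v"
  assumes rooted: "rooted_tree r par"
begin

lemma par_root [simp]: "par r = r"
  using rooted unfolding rooted_tree_def by blast

lemma funpow_root [simp]: "(par ^^ n) r = r"
  by (induction n) auto

lemma reaches_root: "\<exists>n. (par ^^ n) v = r"
  using rooted unfolding rooted_tree_def by blast

lemma funpow_in_sanc: "n \<ge> 1 \<Longrightarrow> (par ^^ n) v \<in> sanc par v"
  unfolding sanc_def by auto

lemma sancE:
  assumes "u \<in> sanc par v"
  obtains n where "n \<ge> 1" "u = (par ^^ n) v"
  using assms unfolding sanc_def by auto

lemma sanc_par: "sanc par v = insert (par v) (sanc par (par v))"
proof -
  have Suc_step: "(par ^^ Suc k) v = (par ^^ k) (par v)" for k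
    by (simp add: funpow_Suc_right del: funpow.simps)
  show ?thesis
  proof (intro equalityI subsetI)
    fix x assume "x \<in> sanc par v"
    then obtain k where "x = (par ^^ Suc k) v" by (auto elim!: sancE dest!: Suc_le_D)
    then show "x \<in> insert (par v) (sanc par (par v))"
      by (cases k) (auto simp only: Suc_step funpow_in_sanc funpow_0 insert_iff)
  next
    fix x assume "x \<in> insert (par v) (sanc par (par v))"
    then obtain k where "x = (par ^^ Suc k) v"
      by (auto elim!: sancE simp only: Suc_step) (metis funpow_0)
    then show "x \<in> sanc par v" by (simp only: funpow_in_sanc)
  qed
qed

lemma sanc_trans: "u \<in> sanc par v \<Longrightarrow> w \<in> sanc par u \<Longrightarrow> w \<in> sanc par v"
proof -
  assume "u \<in> sanc par v" "w \<in> sanc par u"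
  then obtain m n where "m \<ge> 1" "u = (par ^^ m) v" "w = (par ^^ n) u"
    by (auto elim!: sancE)
  then have "w = (par ^^ (n + m)) v" "n + m \<ge> 1" by (simp_all add: funpow_add)
  then show ?thesis using funpow_in_sanc by simp
qed

lemma root_in_sanc: "r \<in> sanc par v"
proof -
  obtain n where "(par ^^ n) v = r" using reaches_root by blast
  then have "(par ^^ Suc n) v = r" by simp
  then show ?thesis using funpow_in_sanc[of "Suc n" v] by simp
qed

lemma sanc_root [simp]: "sanc par r = {r}"
  using root_in_sanc unfolding sanc_def by auto

lemma sanc_irrefl: "v \<in> sanc par v \<Longrightarrow> v = r"
proof -
  assume "v \<in> sanc par v"
  then obtain n where n: "n \<ge> 1" "(par ^^ n) v = v" by (metis sancE)
  obtain m where m: "(par ^^ m) v = r" using reaches_root by blast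
  have "((par ^^ n) ^^ m) v = v" using n(2) by (induction m) auto
  then have "(par ^^ (n * m)) v = v" by (simp add: funpow_mult)
  moreover have "n * m = (n * m - m) + m" using n(1) by simp
  then have "(par ^^ (n * m)) v = (par ^^ (n * m - m)) ((par ^^ m) v)"
    by (metis funpow_add o_apply)
  ultimately show "v = r" using m by simp
qed

lemma sanc_asym: "u \<in> sanc par w \<Longrightarrow> w \<in> sanc par u \<Longrightarrow> w = r"
  by (rule sanc_irrefl) (rule sanc_trans)

lemma common_sanc: "\<exists>m. sanc par v \<inter> sanc par w = insert m (sanc par m)"
proof -
  define P where "P n \<longleftrightarrow> n \<ge> 1 \<and> (par ^^ n) v \<in> sanc par w" for n
  obtain k where "(par ^^ k) v = r" using reaches_root by blast
  then have "P (Suc k)" using root_in_sanc unfolding P_def by simp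
  then obtain n0 where n0: "P n0" and least: "\<And>n. n < n0 \<Longrightarrow> \<not> P n"
    using exists_least_iff[of P] by blast
  define m where "m = (par ^^ n0) v"
  have "sanc par v \<inter> sanc par w \<subseteq> insert m (sanc par m)"
  proof
    fix x assume x: "x \<in> sanc par v \<inter> sanc par w"
    then obtain n where n: "n \<ge> 1" "x = (par ^^ n) v" by (auto elim: sancE)
    then have "P n" using x unfolding P_def by simp
    then have "n0 \<le> n" using least not_less by blast
    then have "x = (par ^^ (n - n0)) m"
      unfolding n m_def by (metis funpow_add le_add_diff_inverse2 o_apply)
    then show "x \<in> insert m (sanc par m)"
      using funpow_in_sanc[of "n - n0" m] by (cases "n - n0 = 0") simp_all
  qed
  moreover have "m \<in> sanc par v" "m \<in> sanc par w"
    using n0 funpow_in_sanc unfolding P_def m_def by simp_all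
  then have "insert m (sanc par m) \<subseteq> sanc par v \<inter> sanc par w"
    by (auto intro: sanc_trans)
  ultimately show ?thesis by blast
qed

end

section \<open>The geometric realisation\<close>

lemma emb_nth [simp]:
  "emb r par u s $ w = (if w = u then 1 - s else if w \<noteq> r \<and> w \<in> sanc par u then 1 else 0)"
  by (simp add: emb_def)

lemma emb_in_realization: "v \<noteq> r \<Longrightarrow> 0 \<le> s \<Longrightarrow> s \<le> 1 \<Longrightarrow> emb r par v s \<in> realization r par"
  unfolding realization_def by auto

lemma zero_in_realization: "0 \<in> realization r par"
  unfolding realization_def by simp

lemma vtx_in_realization: "vtx r par v \<in> realization r par"
  by (simp add: vtx_def emb_in_realization zero_in_realization)

lemma realization_nth_bounds: "x \<in> realization r par \<Longrightarrow> 0 \<le> x $ w \<and> x $ w \<le> 1"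
  unfolding realization_def by auto

lemma realization_nonneg: "x \<in> realization r par \<Longrightarrow> 0 \<le> x"
  by (simp add: less_eq_vec_def realization_nth_bounds[of x r par])

lemma realization_nth_root: "x \<in> realization r par \<Longrightarrow> x $ r = 0"
  unfolding realization_def by auto

lemma realization_eq_emb:
  assumes "x \<in> realization r par" "0 < x $ u" "x $ u < 1"
  shows "u \<noteq> r \<and> x = emb r par u (1 - x $ u)"
proof -
  from assms obtain v s where "v \<noteq> r" "x = emb r par v s"
    unfolding realization_def by auto
  moreover from this have "u = v" using assms(2,3) by (auto split: if_splits)
  ultimately show ?thesis by simp
qed

lemma emb_antimono: "\<sigma> \<le> s \<Longrightarrow> emb r par v s \<le> emb r par v \<sigma>"
  by (simp add: less_eq_vec_def)

lemma linepath_emb: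
  "linepath (emb r par v a) (emb r par v b) t = emb r par v ((1 - t) * a + t * b)"
  by (simp add: linepath_def vec_eq_iff algebra_simps)

lemma path_image_linepath_emb:
  assumes "\<sigma> \<le> 1"
  shows "path_image (linepath (emb r par v \<sigma>) (emb r par v 1)) = emb r par v ` {\<sigma>..1}"
proof -
  have "linepath (emb r par v \<sigma>) (emb r par v 1) = emb r par v \<circ> (\<lambda>t. (1 - \<sigma>) * t + \<sigma>)"
    by (rule ext) (simp add: linepath_emb algebra_simps)
  then have "path_image (linepath (emb r par v \<sigma>) (emb r par v 1))
      = emb r par v ` ((\<lambda>t. (1 - \<sigma>) * t + \<sigma>) ` {0..1})"
    unfolding path_image_def by (simp only: image_comp)
  also have "(\<lambda>t. (1 - \<sigma>) * t + \<sigma>) ` {0..1} = {\<sigma>..1}"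
    using assms by (simp add: image_affinity_atLeastAtMost)
  finally show ?thesis .
qed

context finite_rooted_tree
begin

lemma vtx_nth: "vtx r par m $ z = (if z \<noteq> r \<and> z \<in> insert m (sanc par m) then 1 else 0)"
  by (auto simp: vtx_def)

lemma emb_top: "v \<noteq> r \<Longrightarrow> emb r par v 1 = vtx r par (par v)"
proof -
  assume "v \<noteq> r"
  then have "v \<notin> sanc par v" using sanc_irrefl by blast
  moreover note sanc_v = sanc_par[of v]
  ultimately have "v \<notin> insert (par v) (sanc par (par v))" by simp
  then show ?thesis by (simp add: vec_eq_iff vtx_nth sanc_v)
qed

lemma realization_cases:
  assumes "x \<in> realization r par"
  obtains "x = 0" | v s where "v \<noteq> r" "0 \<le> s" "s < 1" "x = emb r par v s"
proof -
  consider "x = 0" | u s where "u \<noteq> r" "0 \<le> s" "s < 1" "x = emb r par u s"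
    | u where "u \<noteq> r" "x = emb r par u 1"
    using assms unfolding realization_def by (auto simp del: emb_nth) (metis le_less)
  then show thesis
  proof cases
    case (3 u)
    then have "x = vtx r par (par u)" using emb_top by simp
    then show thesis
      using that(1) that(2)[of "par u" 0] unfolding vtx_def by (cases "par u = r") auto
  qed (use that in blast)+
qed

lemma emb_le_emb_ancestor:
  assumes "u \<in> sanc par w" "u \<noteq> r" "0 \<le> \<sigma>" "\<rho> \<le> 1"
  shows "emb r par u \<sigma> \<le> emb r par w \<rho>"
proof -
  have "u \<noteq> w" "w \<notin> sanc par u" using assms(1,2) sanc_asym sanc_irrefl by blast+
  moreover have "z \<in> sanc par w" if "z \<in> sanc par u" for z using sanc_trans assms(1) that by blast
  ultimately show ?thesis using assms by (auto simp: less_eq_vec_def)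
qed

lemma le_emb_cases:
  assumes "y \<in> realization r par" "v \<noteq> r" "0 \<le> \<sigma>" "y \<le> emb r par v \<sigma>"
  obtains \<rho> where "\<sigma> \<le> \<rho>" "\<rho> \<le> 1" "y = emb r par v \<rho>" | "y \<le> emb r par v 1"
proof -
  from assms(1) consider "y = 0" | w \<rho> where "w \<noteq> r" "0 \<le> \<rho>" "\<rho> < 1" "y = emb r par w \<rho>"
    by (rule realization_cases)
  then show thesis
  proof cases
    case 1
    then show thesis using that(2) by (simp add: less_eq_vec_def)
  next
    case (2 w \<rho>)
    have "y $ w \<le> emb r par v \<sigma> $ w" using assms(4) by (simp add: less_eq_vec_def)
    then have "0 < emb r par v \<sigma> $ w" using 2 by simp
    then have "w = v \<or> w \<in> sanc par v" by (auto split: if_splits)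
    then show thesis
    proof
      assume "w = v"
      then have "\<sigma> \<le> \<rho>" using assms(4) 2 by (auto simp: less_eq_vec_def dest: spec[of _ v])
      then show thesis using that(1) 2 \<open>w = v\<close> by simp
    next
      assume "w \<in> sanc par v"
      then show thesis using that(2) 2 emb_le_emb_ancestor by simp
    qed
  qed
qed

lemma emb_le_of_nth_gt:
  assumes "y \<in> realization r par" "0 \<le> c" "c < y $ u"
  shows "emb r par u (1 - c) \<le> y"
proof -
  from assms(1) consider "y = 0" | w \<rho> where "w \<noteq> r" "0 \<le> \<rho>" "\<rho> < 1" "y = emb r par w \<rho>"
    by (rule realization_cases)
  then show ?thesis
  proof cases
    case 1
    then show ?thesis using assms(2,3) by simp
  next
    case (2 w \<rho>)
    have "c \<le> 1" using assms(1,3) realization_nth_bounds[of y r par u] by simp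
    have "u = w \<or> (u \<noteq> r \<and> u \<in> sanc par w)"
      using assms(2,3) 2 by (auto split: if_splits)
    then show ?thesis
    proof
      assume "u = w"
      then have "\<rho> \<le> 1 - c" using assms(3) 2 by simp
      then show ?thesis using \<open>u = w\<close> 2 by (simp add: emb_antimono)
    next
      assume "u \<noteq> r \<and> u \<in> sanc par w"
      then show ?thesis using 2 \<open>c \<le> 1\<close> emb_le_emb_ancestor by simp
    qed
  qed
qed

lemma inf_in_realization:
  assumes a: "a \<in> realization r par" and b: "b \<in> realization r par"
  shows "inf a b \<in> realization r par"
proof -
  have comparable: ?thesis if "a \<le> b \<or> b \<le> a"
    using that a b by (metis inf.absorb1 inf.absorb2)
  from a consider "a = 0" | v \<sigma> where "v \<noteq> r" "0 \<le> \<sigma>" "\<sigma> < 1" "a = emb r par v \<sigma>"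
    by (rule realization_cases)
  then show ?thesis
  proof cases
    case 1
    then show ?thesis using comparable realization_nonneg[OF b] by simp
  next
    case av: (2 v \<sigma>)
    from b consider "b = 0" | w \<rho> where "w \<noteq> r" "0 \<le> \<rho>" "\<rho> < 1" "b = emb r par w \<rho>"
      by (rule realization_cases)
    then show ?thesis
    proof cases
      case 1
      then show ?thesis using comparable realization_nonneg[OF a] by simp
    next
      case bw: (2 w \<rho>)
      consider "v = w" | "v \<in> sanc par w" | "w \<in> sanc par v"
        | "v \<noteq> w" "v \<notin> sanc par w" "w \<notin> sanc par v"
        by blast
      then show ?thesis
      proof cases
        case 1
        then show ?thesis using comparable av bw by (metis emb_antimono nle_le)
      next
        case 2
        then show ?thesis using comparable av bw emb_le_emb_ancestor by simp
      next
        case 3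
        then show ?thesis using comparable av bw emb_le_emb_ancestor by simp
      next
        case 4
        obtain m where m: "sanc par v \<inter> sanc par w = insert m (sanc par m)"
          using common_sanc by blast
        have "v \<notin> sanc par v" "w \<notin> sanc par w" using av bw sanc_irrefl by blast+
        then have "inf a b = vtx r par m"
          using 4 av bw unfolding vec_eq_iff vtx_nth m[symmetric] by auto
        then show ?thesis using vtx_in_realization by simp
      qed
    qed
  qed
qed

lemma down_set_emb:
  assumes "v \<noteq> r" "0 \<le> \<sigma>" "\<sigma> \<le> 1"
  shows "{y \<in> realization r par. y \<le> emb r par v \<sigma>}
    = emb r par v ` {\<sigma>..1} \<union> {y \<in> realization r par. y \<le> vtx r par (par v)}"
proof (intro equalityI subsetI)
  fix y assume y: "y \<in> {y \<in> realization r par. y \<le> emb r par v \<sigma>}"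
  then show "y \<in> emb r par v ` {\<sigma>..1} \<union> {y \<in> realization r par. y \<le> vtx r par (par v)}"
    using assms(1,2) emb_top[OF assms(1)] by (auto elim: le_emb_cases)
next
  fix y assume "y \<in> emb r par v ` {\<sigma>..1} \<union> {y \<in> realization r par. y \<le> vtx r par (par v)}"
  then show "y \<in> {y \<in> realization r par. y \<le> emb r par v \<sigma>}"
  proof
    assume "y \<in> emb r par v ` {\<sigma>..1}"
    then obtain s where "\<sigma> \<le> s" "s \<le> 1" "y = emb r par v s" by auto
    then show ?thesis using assms(1,2) by (simp add: emb_in_realization emb_antimono)
  next
    assume "y \<in> {y \<in> realization r par. y \<le> vtx r par (par v)}"
    moreover have "vtx r par (par v) \<le> emb r par v \<sigma>"
      using emb_top[OF assms(1)] emb_antimono assms(3) by metis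
    ultimately show ?thesis by auto
  qed
qed

lemma edge_inter_down_set_top:
  assumes "v \<noteq> r"
  shows "emb r par v ` {\<sigma>..1} \<inter> {y \<in> realization r par. y \<le> vtx r par (par v)}
    \<subseteq> {vtx r par (par v)}"
proof
  fix y assume y: "y \<in> emb r par v ` {\<sigma>..1} \<inter> {y \<in> realization r par. y \<le> vtx r par (par v)}"
  then obtain s where s: "s \<le> 1" "y = emb r par v s" by auto
  have "y $ v \<le> vtx r par (par v) $ v" using y by (auto simp: less_eq_vec_def)
  also have "\<dots> = 0" using emb_top[OF assms, symmetric] by simp
  finally have "s = 1" using s by simp
  then show "y \<in> {vtx r par (par v)}" using s emb_top[OF assms] by simp
qed

lemma arc_emb_to_root:
  "(par ^^ n) v = r \<Longrightarrow> v \<noteq> r \<Longrightarrow> 0 \<le> \<sigma> \<Longrightarrow> \<sigma> < 1 \<Longrightarrow>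
    \<exists>\<gamma>. arc \<gamma> \<and> pathstart \<gamma> = emb r par v \<sigma> \<and> pathfinish \<gamma> = 0 \<and>
      path_image \<gamma> = {y \<in> realization r par. y \<le> emb r par v \<sigma>}"
proof (induction n arbitrary: v \<sigma>)
  case 0
  then show ?case by simp
next
  case (Suc n)
  define seg where "seg = linepath (emb r par v \<sigma>) (emb r par v 1)"
  have "emb r par v \<sigma> \<noteq> emb r par v 1" using Suc.prems(4) by (auto simp: vec_eq_iff)
  then have "arc seg" unfolding seg_def by (rule arc_linepath)
  have seg_image: "path_image seg = emb r par v ` {\<sigma>..1}"
    unfolding seg_def by (rule path_image_linepath_emb) (use Suc.prems(4) in simp)
  have seg_end: "pathfinish seg = vtx r par (par v)"
    unfolding seg_def using emb_top[OF Suc.prems(2)] by simp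
  have down: "{y \<in> realization r par. y \<le> emb r par v \<sigma>}
      = path_image seg \<union> {y \<in> realization r par. y \<le> vtx r par (par v)}"
    unfolding seg_image using Suc.prems by (simp add: down_set_emb)
  show ?case
  proof (cases "par v = r")
    case True
    then have "vtx r par (par v) = 0" by (simp add: vtx_def)
    then have "{y \<in> realization r par. y \<le> vtx r par (par v)} = {pathfinish seg}"
      using seg_end
      by (auto intro: order.antisym dest: realization_nonneg simp: zero_in_realization)
    then show ?thesis
      using \<open>arc seg\<close> seg_end True down by (intro exI[of _ seg]) (auto simp: seg_def vtx_def)
  next
    case False
    have "(par ^^ n) (par v) = r"
      using Suc.prems(1) by (simp add: funpow_Suc_right del: funpow.simps)
    with Suc.IH[of "par v" 0] False obtain \<gamma> where \<gamma>: "arc \<gamma>"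
      "pathstart \<gamma> = vtx r par (par v)" "pathfinish \<gamma> = 0"
      "path_image \<gamma> = {y \<in> realization r par. y \<le> vtx r par (par v)}"
      by (auto simp: vtx_def)
    have "path_image seg \<inter> path_image \<gamma> \<subseteq> {pathstart \<gamma>}"
      using edge_inter_down_set_top[OF Suc.prems(2), of \<sigma>] seg_image \<gamma>(2,4) by simp
    then have "arc (seg +++ \<gamma>)" using \<open>arc seg\<close> \<gamma>(1,2) seg_end by (intro arc_join) auto
    moreover have "path_image (seg +++ \<gamma>) = {y \<in> realization r par. y \<le> emb r par v \<sigma>}"
      using seg_end \<gamma>(2,4) down by (simp add: path_image_join)
    ultimately show ?thesis using \<gamma>(3) by (intro exI[of _ "seg +++ \<gamma>"]) (simp add: seg_def)
  qed
qed

lemma arc_to_root: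
  assumes "x \<in> realization r par" "x \<noteq> 0"
  obtains \<gamma> where "arc \<gamma>" "pathstart \<gamma> = x" "pathfinish \<gamma> = 0"
    "path_image \<gamma> = {y \<in> realization r par. y \<le> x}"
proof -
  from assms obtain v \<sigma> where "v \<noteq> r" "0 \<le> \<sigma>" "\<sigma> < 1" "x = emb r par v \<sigma>"
    by (auto elim: realization_cases)
  moreover obtain n where "(par ^^ n) v = r" using reaches_root by blast
  ultimately show thesis using that arc_emb_to_root by blast
qed

lemma arc_through:
  assumes "x \<in> realization r par" "y \<in> realization r par" "y < x"
  obtains \<gamma> s where "arc \<gamma>" "pathstart \<gamma> = x" "pathfinish \<gamma> = 0"
    "path_image \<gamma> \<subseteq> realization r par" "0 < s" "s \<le> 1" "\<gamma> s = y"
proof -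
  have "x \<noteq> 0" using assms(2,3) realization_nonneg by fastforce
  with assms(1) obtain \<gamma> where \<gamma>: "arc \<gamma>" "pathstart \<gamma> = x" "pathfinish \<gamma> = 0"
    "path_image \<gamma> = {y \<in> realization r par. y \<le> x}"
    by (rule arc_to_root)
  then have "y \<in> path_image \<gamma>" using assms(2,3) by simp
  then obtain s where "s \<in> {0..1}" "\<gamma> s = y" unfolding path_image_def by blast
  moreover have "s \<noteq> 0" using \<gamma>(2) \<open>\<gamma> s = y\<close> assms(3) unfolding pathstart_def by auto
  ultimately show thesis using \<gamma>(4) by (intro that[OF \<gamma>(1,2,3)]) auto
qed

end

section \<open>Merge trees: ancestors are coordinatewise smaller\<close>

locale merge_tree_realisation = finite_rooted_tree +
  fixes f :: "real^'v \<Rightarrow> ereal"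
  assumes merge: "merge_tree r par f"
begin

lemma f_strict_mono_on_arc:
  assumes "arc \<gamma>" "path_image \<gamma> \<subseteq> realization r par" "pathfinish \<gamma> = 0"
  shows "strict_mono_on {0..1} (f \<circ> \<gamma>)"
  using merge assms unfolding merge_tree_def vtx_def by simp

lemma f_strict_antimono:
  assumes "x \<in> realization r par" "y \<in> realization r par" "y < x"
  shows "f x < f y"
proof -
  obtain \<gamma> s where \<gamma>: "arc \<gamma>" "pathstart \<gamma> = x" "pathfinish \<gamma> = 0"
    "path_image \<gamma> \<subseteq> realization r par" "0 < s" "s \<le> 1" "\<gamma> s = y"
    using assms by (rule arc_through)
  then have "(f \<circ> \<gamma>) 0 < (f \<circ> \<gamma>) s"
    by (intro strict_mono_onD[OF f_strict_mono_on_arc]) auto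
  then show ?thesis using \<gamma>(2,7) unfolding pathstart_def by simp
qed

lemma prec_imp_le:
  assumes "prec r par f x y"
  shows "y \<le> x"
proof (rule ccontr)
  obtain \<gamma> where \<gamma>: "path \<gamma>" "path_image \<gamma> \<subseteq> realization r par" "pathstart \<gamma> = x"
    "pathfinish \<gamma> = y" "mono_on {0..1} (f \<circ> \<gamma>)"
    using assms unfolding prec_def by blast
  have x: "x \<in> realization r par" and y: "y \<in> realization r par"
    using assms unfolding prec_def by auto
  assume "\<not> y \<le> x"
  then obtain u where "x $ u < y $ u" by (auto simp: less_eq_vec_def not_le)
  define c where "c = (x $ u + y $ u) / 2"
  have c: "0 < c" "c < 1" "x $ u < c" "c < y $ u"
    using \<open>x $ u < y $ u\<close> realization_nth_bounds[OF x, of u] realization_nth_bounds[OF y, of u]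
    unfolding c_def by auto
  have "continuous_on {0..1} (\<lambda>t. \<gamma> t $ u)"
    using \<gamma>(1) unfolding path_def by (rule continuous_on_component)
  then obtain t where t: "0 \<le> t" "t \<le> 1" "\<gamma> t $ u = c"
    using IVT'[of "\<lambda>t. \<gamma> t $ u" 0 c 1] \<gamma>(3,4) c unfolding pathstart_def pathfinish_def by auto
  have "\<gamma> t \<in> realization r par" using \<gamma>(2) t unfolding path_image_def by auto
  then have "\<gamma> t = emb r par u (1 - c)"
    using realization_eq_emb[of "\<gamma> t" r par u] t(3) c(1,2) by simp
  also have "\<dots> < y"
    using emb_le_of_nth_gt[OF y _ c(4)] c(1,4) by (auto simp: less_le)
  finally have "f y < f (\<gamma> t)" using f_strict_antimono[OF y] \<open>\<gamma> t \<in> realization r par\<close> by blast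
  moreover have "f (\<gamma> t) \<le> f (\<gamma> 1)" using mono_onD[OF \<gamma>(5), of t 1] t by simp
  ultimately show False using \<gamma>(4) unfolding pathfinish_def by simp
qed

lemma le_imp_prec:
  assumes x: "x \<in> realization r par" and y: "y \<in> realization r par" and "y \<le> x"
  shows "prec r par f x y"
proof (cases "y = x")
  case True
  then show ?thesis
    using x unfolding prec_def
    by (intro conjI exI[of _ "\<lambda>_. x"])
      (auto simp: path_def pathstart_def pathfinish_def path_image_def mono_on_def)
next
  case False
  then obtain \<gamma> s where \<gamma>: "arc \<gamma>" "pathstart \<gamma> = x" "pathfinish \<gamma> = 0"
    "path_image \<gamma> \<subseteq> realization r par" "0 < s" "s \<le> 1" "\<gamma> s = y"
    using assms by (auto simp: less_le elim: arc_through)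
  have "mono_on {0..1} (f \<circ> subpath 0 s \<gamma>)"
  proof (rule mono_onI)
    fix a b :: real assume "a \<in> {0..1}" "b \<in> {0..1}" "a \<le> b"
    then have "s * a \<in> {0..1}" "s * b \<in> {0..1}" "s * a \<le> s * b"
      using \<gamma>(5,6) by (auto simp: mult_le_one)
    then show "(f \<circ> subpath 0 s \<gamma>) a \<le> (f \<circ> subpath 0 s \<gamma>) b"
      using strict_mono_on_leD[OF f_strict_mono_on_arc[OF \<gamma>(1,4,3)]] by (simp add: subpath_def)
  qed
  moreover have "path (subpath 0 s \<gamma>)" using arc_imp_path[OF \<gamma>(1)] \<gamma>(5,6) by simp
  moreover have "path_image (subpath 0 s \<gamma>) \<subseteq> realization r par"
    using path_image_subpath_subset[of 0 s \<gamma>] \<gamma>(4,5,6) by auto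
  ultimately show ?thesis using x y \<gamma>(2,7)
    unfolding prec_def
    by (intro conjI exI[of _ "subpath 0 s \<gamma>"]) (auto simp: subpath_def pathstart_def pathfinish_def)
qed

lemma prec_iff: "prec r par f x y \<longleftrightarrow> x \<in> realization r par \<and> y \<in> realization r par \<and> y \<le> x"
  using prec_imp_le le_imp_prec unfolding prec_def by blast

lemma subtree_eq: "x \<in> realization r par \<Longrightarrow> subtree r par f x = {y \<in> realization r par. x \<le> y}"
  unfolding subtree_def prec_iff by auto

lemma lca_eq_inf:
  assumes "a \<in> realization r par" "b \<in> realization r par"
  shows "lca r par f a b = inf a b"
proof -
  have "prec r par f a z \<and> prec r par f b z \<and>
      (\<forall>w. prec r par f a w \<and> prec r par f b w \<longrightarrow> prec r par f z w) \<longleftrightarrow> z = inf a b" for z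
  proof
    assume lower: "prec r par f a z \<and> prec r par f b z \<and>
      (\<forall>w. prec r par f a w \<and> prec r par f b w \<longrightarrow> prec r par f z w)"
    then have "z \<le> inf a b" by (simp add: prec_iff)
    moreover have "inf a b \<le> z"
      using lower[THEN conjunct2, THEN conjunct2, rule_format, of "inf a b"]
        assms inf_in_realization[OF assms] by (simp add: prec_iff)
    ultimately show "z = inf a b" by (rule order.antisym)
  qed (use assms inf_in_realization[OF assms] in \<open>simp add: prec_iff\<close>)
  then show ?thesis unfolding lca_def by simp
qed

end

section \<open>Partial in-order curves\<close>

lemma visits_edge_point:
  assumes "partial_in_order r par f le \<tau>" "p \<in> realization r par" "0 < p $ u" "p $ u < 1"
  shows "visits \<tau> p \<in> {1, 2}"
proof -
  have "p \<notin> range (vtx r par)"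
    using assms(3,4) by (auto simp: vtx_def split: if_splits)
  then have "down_degree r par p = 1" by (simp add: down_degree_def)
  have "{v. unvisited_planted r par f \<tau> p v} \<subseteq> {u}"
    using assms(3,4) by (auto simp: unvisited_planted_def planted_at_def split: if_splits)
  then have "unvisited_degree r par f \<tau> p \<le> 1"
    unfolding unvisited_degree_def using card_mono[of "{u}"] by fastforce
  moreover have
    "int (visits \<tau> p) = int (down_degree r par p) + 1 - int (unvisited_degree r par f \<tau> p)"
    using assms(1,2) unfolding partial_in_order_def by blast
  ultimately show ?thesis using \<open>down_degree r par p = 1\<close> by auto
qed

lemma connected_component_set_separated:
  fixes S :: "real set"
  assumes "a \<in> S" "b \<in> S" "a < m" "m < b" "m \<notin> S"
  shows "connected_component_set S a \<noteq> connected_component_set S b"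
proof
  assume "connected_component_set S a = connected_component_set S b"
  then have "b \<in> connected_component_set S a" using assms(2) by simp
  moreover have "a \<in> connected_component_set S a" using assms(1) by simp
  ultimately have "{a..b} \<subseteq> connected_component_set S a"
    by (intro connected_contains_Icc) auto
  then have "m \<in> connected_component_set S a" by (rule subsetD) (use assms(3,4) in simp)
  then show False using connected_component_subset[of S a] assms(5) by blast
qed

lemma three_le_card_components_level_set:
  fixes g :: "real \<Rightarrow> real" and c :: real
  defines "S \<equiv> {s \<in> {0..1}. g s = c}"
  assumes "continuous_on {0..1} g" "g 0 < c" "c < g a" "g b < c" "c < g d"
    and "0 \<le> a" "a \<le> b" "b \<le> d" "d \<le> 1" "finite (components S)"
  shows "3 \<le> card (components S)"
proof -
  have cont: "continuous_on {x..y} g" if "0 \<le> x" "y \<le> 1" for x y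
    using continuous_on_subset[OF assms(2)] that by auto
  obtain s1 where s1: "0 \<le> s1" "s1 \<le> a" "g s1 = c"
    using IVT'[of g 0 c a] cont assms by fastforce
  obtain s2 where s2: "a \<le> s2" "s2 \<le> b" "g s2 = c"
    using IVT2'[of g b c a] cont assms by fastforce
  obtain s3 where s3: "b \<le> s3" "s3 \<le> d" "g s3 = c"
    using IVT'[of g b c d] cont assms by fastforce
  have in_S: "s1 \<in> S" "s2 \<in> S" "s3 \<in> S" and gaps: "a \<notin> S" "b \<notin> S"
    using s1 s2 s3 assms unfolding S_def by auto
  have order: "s1 < a" "a < s2" "s2 < b" "b < s3"
    using s1 s2 s3 assms by (auto simp: order.order_iff_strict)
  let ?C = "connected_component_set S"
  have "?C s1 \<noteq> ?C s2" "?C s1 \<noteq> ?C s3" "?C s2 \<noteq> ?C s3"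
    using connected_component_set_separated in_S gaps order by (metis order.strict_trans)+
  then have "card {?C s1, ?C s2, ?C s3} = 3" by simp
  moreover have "{?C s1, ?C s2, ?C s3} \<subseteq> components S"
    using in_S componentsI by blast
  ultimately show ?thesis using card_mono[OF assms(11)] by metis
qed

lemma partial_in_order_min_le_nth:
  assumes "partial_in_order r par f le \<tau>" "0 \<le> t1" "t1 \<le> t" "t \<le> t2" "t2 \<le> 1"
  shows "min (\<tau> t1 $ u) (\<tau> t2 $ u) \<le> \<tau> t $ u"
proof (rule ccontr)
  have cont: "continuous_on {0..1} \<tau>" and in_T: "\<And>s. s \<in> {0..1} \<Longrightarrow> \<tau> s \<in> realization r par"
    and "\<tau> 0 = 0"
    using assms(1) unfolding partial_in_order_def vtx_def by auto
  assume "\<not> min (\<tau> t1 $ u) (\<tau> t2 $ u) \<le> \<tau> t $ u"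
  then have dip: "\<tau> t $ u < \<tau> t1 $ u" "\<tau> t $ u < \<tau> t2 $ u" by simp_all
  define c where "c = (\<tau> t $ u + min (\<tau> t1 $ u) (\<tau> t2 $ u)) / 2"
  have "0 \<le> \<tau> t $ u" "\<tau> t1 $ u \<le> 1"
    using realization_nth_bounds[OF in_T] assms(2-5) by auto
  then have c: "0 < c" "c < 1" "\<tau> t $ u < c" "c < \<tau> t1 $ u" "c < \<tau> t2 $ u"
    using dip unfolding c_def by (auto simp: min_def)
  define p where "p = emb r par u (1 - c)"
  have "u \<noteq> r" using realization_nth_root[OF in_T, of t1] c(1,4) assms(2-5) by auto
  then have "p \<in> realization r par" unfolding p_def using c(1,2) by (simp add: emb_in_realization)
  moreover have "p $ u = c" unfolding p_def by simp
  ultimately have "visits \<tau> p \<in> {1, 2}" using assms(1) c(1,2) by (intro visits_edge_point) auto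
  moreover have "{s \<in> {0..1}. \<tau> s = p} = {s \<in> {0..1}. \<tau> s $ u = c}"
    using realization_eq_emb[OF in_T] c(1,2) \<open>p $ u = c\<close> unfolding p_def by force
  ultimately have level: "card (components {s \<in> {0..1}. \<tau> s $ u = c}) \<in> {1, 2}"
    unfolding visits_def by simp
  then have "finite (components {s \<in> {0..1}. \<tau> s $ u = c})" using card.infinite by force
  with c assms(2-5) \<open>\<tau> 0 = 0\<close> have "3 \<le> card (components {s \<in> {0..1}. \<tau> s $ u = c})"
    by (intro three_le_card_components_level_set[where a = t1 and b = t and d = t2]
        continuous_on_component cont) auto
  with level show False by auto
qed

theorem lemma11:
  fixes r :: "'v::finite" and par :: "'v \<Rightarrow> 'v" and f :: "real^'v \<Rightarrow> ereal"
    and le :: "real \<Rightarrow> real^'v \<Rightarrow> real^'v \<Rightarrow> bool"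
    and \<tau> :: "real \<Rightarrow> real^'v" and t1 t2 :: real
  assumes "merge_tree r par f"
    and "layer_order r par f le"
    and "partial_in_order r par f le \<tau>"
    and "0 \<le> t1" and "t1 \<le> t2" and "t2 \<le> 1"
  shows "\<forall>t\<in>{t1..t2}. \<tau> t \<in> subtree r par f (lca r par f (\<tau> t1) (\<tau> t2))"
proof
  interpret merge_tree_realisation r par f
    using assms(1) by unfold_locales (simp_all add: merge_tree_def)
  fix t assume t: "t \<in> {t1..t2}"
  have in_T: "\<tau> s \<in> realization r par" if "s \<in> {0..1}" for s
    using assms(3) that unfolding partial_in_order_def by auto
  then have ends: "\<tau> t1 \<in> realization r par" "\<tau> t2 \<in> realization r par"
    using assms(4-6) by auto
  have "inf (\<tau> t1) (\<tau> t2) \<le> \<tau> t"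
    using partial_in_order_min_le_nth[OF assms(3)] t assms(4-6) by (simp add: less_eq_vec_def)
  then show "\<tau> t \<in> subtree r par f (lca r par f (\<tau> t1) (\<tau> t2))"
    using in_T[of t] t assms(4-6) ends
    by (simp add: lca_eq_inf subtree_eq inf_in_realization)
qed

end
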